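(* Let $P=\{p_1,\dots,p_n\}$ be weighted points in $\mathbb{R}^d$ with total weight $1$, let $S=\{s_1,\dots,s_m\}$ be $d$-dimensional simplices in $\mathbb{R}^d$ of total volume $1$ with longest edge length $\Delta$, let $\delta>0$, and let $Q$ be the set of cells produced by the subdivision in the context. Then $|Q|=O\!\left(\frac{5^d\,d\,d^{d/2}\,nm}{\delta^d}\log\frac{(nm)^{1/d}\Delta}{\delta}\right)$.
   Context: Subdivision: overlay a uniform grid of cubes of side $\Delta$ and keep the cells intersected by some simplex of $S$. Repeatedly subdivide each cell into $2^d$ equal subcubes until, for every point of $P$, the ratio of the Euclidean distances to the furthest and closest point of the cell is at most $1+\delta$, or until the cell lies wholly within distance $\delta/(nm)^{1/d}$ of some point of $P$. $Q$ is the set of resulting cells. *)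

theory Defs
  imports "HOL-Probability.Probability"
begin

text \<open>Explicit d-dimensional Euclidean space: points are extensional functions
  on the index set {..<d}.\<close>

definition RR :: "nat \<Rightarrow> (nat \<Rightarrow> real) set" where
  "RR d = PiE {..<d} (\<lambda>_. UNIV)"

definition edist :: "nat \<Rightarrow> (nat \<Rightarrow> real) \<Rightarrow> (nat \<Rightarrow> real) \<Rightarrow> real" where
  "edist d x y = sqrt (\<Sum>i<d. (x i - y i)^2)"

definition leb :: "nat \<Rightarrow> (nat \<Rightarrow> real) measure" where
  "leb d = PiM {..<d} (\<lambda>_. lborel)"

definition dcube :: "nat \<Rightarrow> (nat \<Rightarrow> real) \<Rightarrow> real \<Rightarrow> (nat \<Rightarrow> real) set" where
  "dcube d a s = PiE {..<d} (\<lambda>i. {a i .. a i + s})"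

definition dsimplex :: "nat \<Rightarrow> (nat \<Rightarrow> nat \<Rightarrow> real) \<Rightarrow> (nat \<Rightarrow> real) set" where
  "dsimplex d v = {x. x \<in> RR d \<and> (\<exists>l. (\<forall>j\<le>d. 0 \<le> l j) \<and> (\<Sum>j\<le>d. l j) = 1
      \<and> (\<forall>i<d. x i = (\<Sum>j\<le>d. l j * v j i)))}"

definition aff_indep :: "nat \<Rightarrow> (nat \<Rightarrow> nat \<Rightarrow> real) \<Rightarrow> bool" where
  "aff_indep d v \<longleftrightarrow> (\<forall>c. (\<forall>i<d. (\<Sum>j\<in>{1..d}. c j * (v j i - v 0 i)) = 0)
      \<longrightarrow> (\<forall>j\<in>{1..d}. c j = 0))"

text \<open>Stopping criterion for a cell (a, s): for every point p_k, the ratio of the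
  distances to the furthest and closest point of the cell is at most 1+delta
  (written multiplicatively; a closest distance 0 means ratio infinity),
  or the cell lies wholly within distance delta/(nm)^(1/d) of some point.\<close>
definition stop_cell :: "nat \<Rightarrow> real \<Rightarrow> nat \<Rightarrow> nat \<Rightarrow> (nat \<Rightarrow> nat \<Rightarrow> real)
    \<Rightarrow> (nat \<Rightarrow> real) \<times> real \<Rightarrow> bool" where
  "stop_cell d \<delta> n m p c \<longleftrightarrow>
     (\<forall>k<n. (SUP x\<in>dcube d (fst c) (snd c). edist d (p k) x)
              \<le> (1 + \<delta>) * (INF x\<in>dcube d (fst c) (snd c). edist d (p k) x))
   \<or> (\<exists>k<n. \<forall>x\<in>dcube d (fst c) (snd c).
              edist d (p k) x \<le> \<delta> / (real (n * m)) powr (1 / real d))"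

inductive reached :: "nat \<Rightarrow> real \<Rightarrow> real \<Rightarrow> nat \<Rightarrow> nat \<Rightarrow> (nat \<Rightarrow> nat \<Rightarrow> real)
    \<Rightarrow> (nat \<Rightarrow> nat \<Rightarrow> nat \<Rightarrow> real) \<Rightarrow> (nat \<Rightarrow> real) \<times> real \<Rightarrow> bool"
  for d \<Delta> \<delta> n m p V where
  init: "a \<in> RR d \<Longrightarrow> (\<forall>i<d. \<exists>z::int. a i = of_int z * \<Delta>)
     \<Longrightarrow> (\<exists>k<m. dcube d a \<Delta> \<inter> dsimplex d (V k) \<noteq> {})
     \<Longrightarrow> reached d \<Delta> \<delta> n m p V (a, \<Delta>)"
| sub: "reached d \<Delta> \<delta> n m p V (a, s) \<Longrightarrow> \<not> stop_cell d \<delta> n m p (a, s)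
     \<Longrightarrow> b \<in> RR d \<Longrightarrow> (\<forall>i<d. b i = a i \<or> b i = a i + s / 2)
     \<Longrightarrow> reached d \<Delta> \<delta> n m p V (b, s / 2)"

definition cells_Q :: "nat \<Rightarrow> real \<Rightarrow> real \<Rightarrow> nat \<Rightarrow> nat \<Rightarrow> (nat \<Rightarrow> nat \<Rightarrow> real)
    \<Rightarrow> (nat \<Rightarrow> nat \<Rightarrow> nat \<Rightarrow> real) \<Rightarrow> ((nat \<Rightarrow> real) \<times> real) set" where
  "cells_Q d \<Delta> \<delta> n m p V = {c. reached d \<Delta> \<delta> n m p V c \<and> stop_cell d \<delta> n m p c}"

end

theory Submission
  imports Defs
begin

text \<open>An initial cell meets a simplex whose edges are at most Delta long, so its corner is one
  of at most 4^d grid points near a vertex of that simplex. A cell of side s = Delta / 2^l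
  that does not stop comes within distance s sqrt d / delta of some point, and it is not
  too small: if s sqrt d (1 + delta) is at most delta times the proximity radius
  delta / (nm)^(1/d), the cell either lies within that radius of a point or is so far from
  every point, compared with its diameter s sqrt d, that all distance ratios are at most
  1 + delta. So only about log (sqrt d X / delta) levels l occur, where
  X = (nm)^(1/d) Delta / delta, and on each level there are at most (4 sqrt d / delta + 4)^d
  such subcubes near each point. Each simplex has volume at most Delta^d, so the total
  volume 1 forces m Delta^d \<ge> 1, hence X \<ge> 1 / delta \<ge> 2, and all terms are absorbed
  into 20 5^d d d^(d/2) nm / delta^d ln X.\<close>

section \<open>Distances, cubes and simplices\<close>

lemma edist_eq_L2_set: "edist d x y = L2_set (\<lambda>i. x i - y i) {..<d}"
  by (simp add: edist_def L2_set_def)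

lemma edist_triangle: "edist d x z \<le> edist d x y + edist d y z"
proof -
  have "edist d x z = L2_set (\<lambda>i. (x i - y i) + (y i - z i)) {..<d}"
    by (simp add: edist_eq_L2_set)
  also have "\<dots> \<le> edist d x y + edist d y z"
    unfolding edist_eq_L2_set by (rule L2_set_triangle_ineq)
  finally show ?thesis .
qed

lemma edist_nonneg: "0 \<le> edist d x y"
  by (simp add: edist_def sum_nonneg)

lemma abs_coord_diff_le_edist:
  assumes "i < d"
  shows "\<bar>x i - y i\<bar> \<le> edist d x y"
proof -
  have "(x i - y i)\<^sup>2 \<le> (\<Sum>j<d. (x j - y j)\<^sup>2)"
    using assms by (intro member_le_sum) auto
  then have "sqrt ((x i - y i)\<^sup>2) \<le> edist d x y"
    unfolding edist_def by (rule real_sqrt_le_mono)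
  then show ?thesis by simp
qed

lemma lower_corner_in_dcube: "a \<in> RR d \<Longrightarrow> 0 \<le> s \<Longrightarrow> a \<in> dcube d a s"
  by (auto simp: RR_def dcube_def PiE_iff)

lemma edist_le_dcube_diameter:
  assumes "x \<in> dcube d a s" "y \<in> dcube d a s" "0 \<le> s"
  shows "edist d x y \<le> s * sqrt d"
proof -
  have "(x i - y i)\<^sup>2 \<le> s\<^sup>2" if "i < d" for i
  proof -
    have "a i \<le> x i \<and> x i \<le> a i + s" "a i \<le> y i \<and> y i \<le> a i + s"
      using assms that by (auto simp: dcube_def PiE_iff)
    then have "\<bar>x i - y i\<bar> \<le> s"
      by (simp add: abs_le_iff)
    then show ?thesis
      using abs_le_square_iff assms(3) by fastforce
  qed
  then have "edist d x y \<le> sqrt (real d * s\<^sup>2)"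
    unfolding edist_def using sum_mono[of "{..<d}" "\<lambda>i. (x i - y i)\<^sup>2" "\<lambda>_. s\<^sup>2"]
    by (intro real_sqrt_le_mono) simp
  also have "\<dots> = s * sqrt d"
    using assms(3) by (simp add: real_sqrt_mult)
  finally show ?thesis .
qed

lemma emeasure_leb_dcube:
  assumes "0 \<le> s"
  shows "emeasure (leb d) (dcube d a s) = ennreal (s ^ d)"
proof -
  interpret product_sigma_finite "\<lambda>_::nat. lborel"
    by (simp add: product_sigma_finite_def lborel.sigma_finite_measure_axioms)
  have "emeasure (leb d) (dcube d a s) = (\<Prod>i<d. emeasure lborel {a i .. a i + s})"
    unfolding leb_def dcube_def by (rule emeasure_PiM) auto
  also have "\<dots> = ennreal (s ^ d)"
    using assms by (simp add: ennreal_power)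
  finally show ?thesis .
qed

lemma measure_leb_le_dcube:
  assumes "S \<subseteq> dcube d a s" "0 \<le> s"
  shows "measure (leb d) S \<le> s ^ d"
proof (cases "S \<in> sets (leb d)")
  case False
  then show ?thesis
    using assms by (simp add: measure_notin_sets)
next
  case True
  have "dcube d a s \<in> sets (leb d)"
    unfolding leb_def dcube_def by (rule sets_PiM_I_finite) auto
  then have "dcube d a s \<in> fmeasurable (leb d)"
    using emeasure_leb_dcube[OF assms(2)] by (simp add: fmeasurable_def)
  then have "measure (leb d) S \<le> measure (leb d) (dcube d a s)"
    using True assms by (intro measure_mono_fmeasurable) auto
  also have "\<dots> = s ^ d"
    using emeasure_leb_dcube[OF assms(2)] assms by (simp add: measure_def)
  finally show ?thesis .
qed

lemma dsimplex_coord_bounds: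
  assumes "x \<in> dsimplex d v" "i < d" "\<And>j. j \<le> d \<Longrightarrow> lo \<le> v j i \<and> v j i \<le> hi"
  shows "lo \<le> x i \<and> x i \<le> hi"
proof -
  obtain l where l: "\<forall>j\<le>d. 0 \<le> l j" "(\<Sum>j\<le>d. l j) = 1" "x i = (\<Sum>j\<le>d. l j * v j i)"
    using assms(1,2) by (auto simp: dsimplex_def)
  have "lo = (\<Sum>j\<le>d. l j * lo)" "hi = (\<Sum>j\<le>d. l j * hi)"
    using l(2) by (simp_all add: sum_distrib_right[symmetric])
  moreover have "(\<Sum>j\<le>d. l j * lo) \<le> x i" "x i \<le> (\<Sum>j\<le>d. l j * hi)"
    unfolding l(3) using l(1) assms(3) by (auto intro!: sum_mono mult_left_mono)
  ultimately show ?thesis by linarith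
qed

lemma measure_dsimplex_le_edge_power:
  assumes edges: "\<And>i j. i \<le> d \<Longrightarrow> j \<le> d \<Longrightarrow> edist d (v i) (v j) \<le> D"
  shows "measure (leb d) (dsimplex d v) \<le> D ^ d"
proof -
  define lo where "lo i = Min ((\<lambda>j. v j i) ` {..d})" for i
  have D: "0 \<le> D"
    using edges[of 0 0] edist_nonneg[of d "v 0" "v 0"] by simp
  have "x \<in> dcube d lo D" if x: "x \<in> dsimplex d v" for x
  proof -
    have "x i \<in> {lo i .. lo i + D}" if i: "i < d" for i
    proof -
      have "lo i \<in> (\<lambda>j. v j i) ` {..d}"
        unfolding lo_def by (intro Min_in) auto
      then obtain j0 where j0: "j0 \<le> d" "lo i = v j0 i"
        by auto
      have "lo i \<le> v j i \<and> v j i \<le> lo i + D" if "j \<le> d" for j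
      proof
        show "lo i \<le> v j i"
          unfolding lo_def using that by (intro Min_le) auto
        show "v j i \<le> lo i + D"
          using that j0 i edges[of j j0] abs_coord_diff_le_edist[of i d "v j" "v j0"] by linarith
      qed
      then show ?thesis
        using dsimplex_coord_bounds[OF x i] by auto
    qed
    moreover have "x \<in> extensional {..<d}"
      using x by (auto simp: dsimplex_def RR_def PiE_iff)
    ultimately show ?thesis by (auto simp: dcube_def PiE_iff)
  qed
  then show ?thesis
    using measure_leb_le_dcube D by blast
qed

lemma sum_measure_dsimplex_le:
  assumes "\<forall>k<m. \<forall>i\<le>d. \<forall>j\<le>d. edist d (V k i) (V k j) \<le> \<Delta>"
  shows "(\<Sum>k<m. measure (leb d) (dsimplex d (V k))) \<le> real m * \<Delta> ^ d"
proof -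
  have "(\<Sum>k<m. measure (leb d) (dsimplex d (V k))) \<le> (\<Sum>k<m. \<Delta> ^ d)"
    using assms by (intro sum_mono measure_dsimplex_le_edge_power) auto
  then show ?thesis
    by simp
qed

lemma edge_le_Max:
  fixes V :: "nat \<Rightarrow> nat \<Rightarrow> nat \<Rightarrow> real"
  assumes "k < m" "i \<le> d" "j \<le> d"
  shows "edist d (V k i) (V k j) \<le> Max {edist d (V k i) (V k j) | k i j. k < m \<and> i \<le> d \<and> j \<le> d}"
proof (rule Max_ge)
  have "{edist d (V k i) (V k j) | k i j. k < m \<and> i \<le> d \<and> j \<le> d}
      \<subseteq> (\<lambda>(k, i, j). edist d (V k i) (V k j)) ` ({..<m} \<times> {..d} \<times> {..d})"
  proof
    fix e assume "e \<in> {edist d (V k i) (V k j) | k i j. k < m \<and> i \<le> d \<and> j \<le> d}"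
    then obtain k i j where "e = edist d (V k i) (V k j)" "k < m" "i \<le> d" "j \<le> d"
      by blast
    then show "e \<in> (\<lambda>(k, i, j). edist d (V k i) (V k j)) ` ({..<m} \<times> {..d} \<times> {..d})"
      by (intro image_eqI[where x="(k, i, j)"]) auto
  qed
  then show "finite {edist d (V k i) (V k j) | k i j. k < m \<and> i \<le> d \<and> j \<le> d}"
    by (rule finite_subset) (intro finite_imageI finite_cartesian_product; simp)
qed (use assms in blast)

section \<open>The stopping rule\<close>

lemma SUP_edist_dcube_le_INF:
  assumes "a \<in> RR d" "0 \<le> s"
  shows "(SUP x\<in>dcube d a s. edist d q x) \<le> (INF x\<in>dcube d a s. edist d q x) + s * sqrt d"
proof -
  let ?K = "dcube d a s"
  have ne: "?K \<noteq> {}"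
    using lower_corner_in_dcube[OF assms] by auto
  have "(SUP x\<in>?K. edist d q x) - s * sqrt d \<le> edist d q y" if y: "y \<in> ?K" for y
  proof -
    have "edist d q x \<le> edist d q y + s * sqrt d" if "x \<in> ?K" for x
      using edist_triangle[of d q x y] edist_le_dcube_diameter[OF y that assms(2)] by linarith
    then have "(SUP x\<in>?K. edist d q x) \<le> edist d q y + s * sqrt d"
      using ne by (intro cSUP_least) auto
    then show ?thesis by simp
  qed
  then have "(SUP x\<in>?K. edist d q x) - s * sqrt d \<le> (INF x\<in>?K. edist d q x)"
    using ne by (intro cINF_greatest) auto
  then show ?thesis by simp
qed

text \<open>If no point is within the proximity radius e of the cell, every point is at distance
  at least e - s sqrt d from it, and the hypothesis makes the diameter s sqrt d at most
  delta times this lower bound.\<close>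
lemma stop_cell_if_small_side:
  assumes "a \<in> RR d" "0 \<le> s" "0 < \<delta>"
    and small: "s * sqrt d * (1 + \<delta>) \<le> \<delta> * (\<delta> / real (n * m) powr (1 / real d))"
  shows "stop_cell d \<delta> n m p (a, s)"
proof -
  let ?K = "dcube d a s"
  let ?e = "\<delta> / real (n * m) powr (1 / real d)"
  have ne: "?K \<noteq> {}"
    using lower_corner_in_dcube[OF assms(1,2)] by auto
  show ?thesis
  proof (cases "\<exists>k<n. \<forall>x\<in>?K. edist d (p k) x \<le> ?e")
    case True
    then show ?thesis by (simp add: stop_cell_def)
  next
    case False
    have "(SUP x\<in>?K. edist d (p k) x) \<le> (1 + \<delta>) * (INF x\<in>?K. edist d (p k) x)" if k: "k < n" for k
    proof -
      obtain x0 where x0: "x0 \<in> ?K" "?e < edist d (p k) x0"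
        using False k by force
      have "?e - s * sqrt d \<le> edist d (p k) x" if "x \<in> ?K" for x
        using edist_triangle[of d "p k" x0 x] edist_le_dcube_diameter[OF that x0(1) assms(2)] x0(2)
        by linarith
      then have "?e - s * sqrt d \<le> (INF x\<in>?K. edist d (p k) x)"
        using ne by (intro cINF_greatest) auto
      moreover have "s * sqrt d \<le> \<delta> * (?e - s * sqrt d)"
        using small by (simp add: algebra_simps)
      ultimately have "s * sqrt d \<le> \<delta> * (INF x\<in>?K. edist d (p k) x)"
        using assms(3) by (meson mult_left_mono less_imp_le order_trans)
      then show ?thesis
        using SUP_edist_dcube_le_INF[OF assms(1,2), of "p k"] by (simp add: algebra_simps)
    qed
    then show ?thesis by (simp add: stop_cell_def)
  qed
qed

lemma not_stop_cell_imp_near_point: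
  assumes "a \<in> RR d" "0 \<le> s" "0 < \<delta>" "\<not> stop_cell d \<delta> n m p (a, s)"
  obtains k x where "k < n" "x \<in> dcube d a s" "edist d (p k) x < s * sqrt d / \<delta>"
proof -
  let ?K = "dcube d a s"
  have ne: "?K \<noteq> {}"
    using lower_corner_in_dcube[OF assms(1,2)] by auto
  obtain k where k: "k < n"
    "(1 + \<delta>) * (INF x\<in>?K. edist d (p k) x) < (SUP x\<in>?K. edist d (p k) x)"
    using assms(4) by (auto simp: stop_cell_def not_le)
  then have "\<delta> * (INF x\<in>?K. edist d (p k) x) < s * sqrt d"
    using SUP_edist_dcube_le_INF[OF assms(1,2), of "p k"] by (simp add: algebra_simps)
  then have "(INF x\<in>?K. edist d (p k) x) < s * sqrt d / \<delta>"
    using assms(3) by (simp add: field_simps)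
  moreover have "bdd_below ((\<lambda>x. edist d (p k) x) ` ?K)"
    using edist_nonneg by (intro bdd_belowI2) blast
  ultimately obtain x where "x \<in> ?K" "edist d (p k) x < s * sqrt d / \<delta>"
    using cINF_less_iff[OF ne] by blast
  then show ?thesis
    using k(1) that by blast
qed

section \<open>Grid cells covering Q\<close>

lemma reached_grid_cell:
  "reached d \<Delta> \<delta> n m p V c \<Longrightarrow> \<exists>k::nat. snd c = \<Delta> / 2 ^ k \<and> fst c \<in> RR d
     \<and> (\<forall>i<d. \<exists>z::int. fst c i = of_int z * snd c)"
proof (induction rule: reached.induct)
  case (init a)
  then show ?case by (intro exI[of _ 0]) auto
next
  case (sub a s b)
  then have "\<exists>k::nat. s = \<Delta> / 2 ^ k \<and> (\<forall>i<d. \<exists>z::int. a i = of_int z * s)"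
    by simp
  then obtain k where k: "s = \<Delta> / 2 ^ k" and a_grid: "\<forall>i<d. \<exists>z::int. a i = of_int z * s"
    by blast
  have "\<exists>z::int. b i = of_int z * (s / 2)" if i: "i < d" for i
  proof -
    obtain z where z: "a i = of_int z * s"
      using a_grid i by blast
    consider "b i = a i" | "b i = a i + s / 2"
      using sub.hyps(4) i by blast
    then show ?thesis
    proof cases
      case 1
      then show ?thesis using z by (intro exI[of _ "2 * z"]) simp
    next
      case 2
      then show ?thesis using z by (intro exI[of _ "2 * z + 1"]) (simp add: algebra_simps)
    qed
  qed
  then show ?case
    using sub.hyps(3) k by (intro exI[of _ "Suc k"]) auto
qed

definition grid_points :: "real \<Rightarrow> real \<Rightarrow> real \<Rightarrow> real set" where
  "grid_points t lo hi = {x. \<exists>z::int. x = of_int z * t \<and> lo \<le> x \<and> x \<le> hi}"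

lemma grid_points_eq_image:
  assumes "0 < t"
  shows "grid_points t lo hi = (\<lambda>z. of_int z * t) ` {\<lceil>lo / t\<rceil>..\<lfloor>hi / t\<rfloor>}"
proof -
  have "lo \<le> of_int z * t \<and> of_int z * t \<le> hi \<longleftrightarrow> z \<in> {\<lceil>lo / t\<rceil>..\<lfloor>hi / t\<rfloor>}" for z
    using assms by (simp add: ceiling_le_iff le_floor_iff pos_divide_le_eq pos_le_divide_eq)
  then show ?thesis
    unfolding grid_points_def by blast
qed

lemma card_grid_points:
  assumes "0 < t" "lo \<le> hi"
  shows "finite (grid_points t lo hi)" "real (card (grid_points t lo hi)) \<le> (hi - lo) / t + 1"
proof -
  show "finite (grid_points t lo hi)"
    using grid_points_eq_image[OF assms(1)] by simp
  have "card (grid_points t lo hi) \<le> card {\<lceil>lo / t\<rceil>..\<lfloor>hi / t\<rfloor>}"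
    unfolding grid_points_eq_image[OF assms(1)] by (rule card_image_le) simp
  also have "\<dots> = nat (\<lfloor>hi / t\<rfloor> + 1 - \<lceil>lo / t\<rceil>)"
    by simp
  finally have "card (grid_points t lo hi) \<le> nat (\<lfloor>hi / t\<rfloor> + 1 - \<lceil>lo / t\<rceil>)" .
  moreover have "real_of_int (\<lfloor>hi / t\<rfloor> + 1 - \<lceil>lo / t\<rceil>) \<le> hi / t + 1 - lo / t"
    using of_int_floor_le[of "hi / t"] le_of_int_ceiling[of "lo / t"] by linarith
  moreover have "hi / t + 1 - lo / t = (hi - lo) / t + 1"
    by (simp add: diff_divide_distrib)
  moreover have "0 \<le> (hi - lo) / t + 1"
    using assms by simp
  ultimately show "real (card (grid_points t lo hi)) \<le> (hi - lo) / t + 1"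
    by linarith
qed

definition grid_cells :: "nat \<Rightarrow> real \<Rightarrow> (nat \<Rightarrow> real) \<Rightarrow> real \<Rightarrow> real
    \<Rightarrow> ((nat \<Rightarrow> real) \<times> real) set" where
  "grid_cells d t c l h = (\<lambda>a. (a, t)) ` PiE {..<d} (\<lambda>i. grid_points t (c i - l) (c i + h))"

lemma card_grid_cells:
  assumes "0 < t" "0 \<le> l + h"
  shows "finite (grid_cells d t c l h)" "real (card (grid_cells d t c l h)) \<le> ((l + h) / t + 1) ^ d"
proof -
  let ?B = "PiE {..<d} (\<lambda>i. grid_points t (c i - l) (c i + h))"
  have lh: "c i - l \<le> c i + h" for i
    using assms(2) by simp
  have card_factor: "real (card (grid_points t (c i - l) (c i + h))) \<le> (l + h) / t + 1" for i
    using card_grid_points(2)[OF assms(1) lh] by (simp add: ac_simps)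
  have finB: "finite ?B"
    using card_grid_points(1)[OF assms(1) lh] by (intro finite_PiE) auto
  then show "finite (grid_cells d t c l h)"
    unfolding grid_cells_def by simp
  have "real (card (grid_cells d t c l h)) \<le> real (card ?B)"
    unfolding grid_cells_def using card_image_le[OF finB] by simp
  also have "\<dots> = (\<Prod>i<d. real (card (grid_points t (c i - l) (c i + h))))"
    by (simp add: card_PiE)
  also have "\<dots> \<le> (\<Prod>i<d. (l + h) / t + 1)"
    using card_factor by (intro prod_mono) auto
  finally show "real (card (grid_cells d t c l h)) \<le> ((l + h) / t + 1) ^ d"
    by simp
qed

lemma initial_cell_in_grid_cells:
  assumes "a \<in> RR d" "\<forall>i<d. \<exists>z::int. a i = of_int z * \<Delta>"
    and "x \<in> dcube d a \<Delta>" "x \<in> dsimplex d v"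
    and edges: "\<forall>j\<le>d. edist d (v j) (v 0) \<le> \<Delta>"
  shows "(a, \<Delta>) \<in> grid_cells d \<Delta> (v 0) (2 * \<Delta>) \<Delta>"
proof -
  have "a i \<in> grid_points \<Delta> (v 0 i - 2 * \<Delta>) (v 0 i + \<Delta>)" if i: "i < d" for i
  proof -
    have "v 0 i - \<Delta> \<le> v j i \<and> v j i \<le> v 0 i + \<Delta>" if "j \<le> d" for j
      using edges that abs_coord_diff_le_edist[OF i, of "v j" "v 0"] by (auto simp: abs_le_iff)
    then have "v 0 i - \<Delta> \<le> x i \<and> x i \<le> v 0 i + \<Delta>"
      using dsimplex_coord_bounds[OF assms(4) i] by blast
    moreover have "a i \<le> x i \<and> x i \<le> a i + \<Delta>"
      using assms(3) i by (auto simp: dcube_def PiE_iff)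
    ultimately show ?thesis
      using assms(2) i unfolding grid_points_def by auto
  qed
  moreover have "a \<in> extensional {..<d}"
    using assms(1) by (simp add: RR_def PiE_iff)
  ultimately show ?thesis
    unfolding grid_cells_def by (auto simp: PiE_iff)
qed

lemma subcell_in_grid_cells:
  assumes "x \<in> dcube d a s" "edist d q x \<le> r"
    and "b \<in> RR d" "\<forall>i<d. b i = a i \<or> b i = a i + s / 2" "\<forall>i<d. \<exists>z::int. b i = of_int z * (s / 2)"
    and "0 \<le> s"
  shows "(b, s / 2) \<in> grid_cells d (s / 2) q (r + s) (r + s / 2)"
proof -
  have "b i \<in> grid_points (s / 2) (q i - (r + s)) (q i + (r + s / 2))" if i: "i < d" for i
  proof -
    have "\<bar>q i - x i\<bar> \<le> r"
      using abs_coord_diff_le_edist[OF i, of q x] assms(2) by simp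
    moreover have "a i \<le> x i \<and> x i \<le> a i + s"
      using assms(1) i by (auto simp: dcube_def PiE_iff)
    moreover have "a i \<le> b i \<and> b i \<le> a i + s / 2"
      using assms(4,6) i by auto
    ultimately show ?thesis
      using assms(5) i unfolding grid_points_def by (auto simp: abs_le_iff)
  qed
  moreover have "b \<in> extensional {..<d}"
    using assms(3) by (simp add: RR_def PiE_iff)
  ultimately show ?thesis
    unfolding grid_cells_def by (auto simp: PiE_iff)
qed

text \<open>In the refined case c is a subcube of a cell of side Delta / 2^l that did not stop;
  that cell comes within distance (Delta / 2^l) sqrt d / delta of p j.\<close>
lemma cells_Q_cases:
  assumes "0 \<le> \<Delta>" "0 < \<delta>" and edges: "\<forall>k<m. \<forall>j\<le>d. edist d (V k j) (V k 0) \<le> \<Delta>"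
    and "c \<in> cells_Q d \<Delta> \<delta> n m p V"
  obtains (initial) k where "k < m" "c \<in> grid_cells d \<Delta> (V k 0) (2 * \<Delta>) \<Delta>"
  | (refined) l j where "\<delta> * (\<delta> / real (n * m) powr (1 / real d)) < \<Delta> * sqrt d * (1 + \<delta>) / 2 ^ l"
      "j < n" "c \<in> grid_cells d (\<Delta> / 2 ^ l / 2) (p j)
         (\<Delta> / 2 ^ l * sqrt d / \<delta> + \<Delta> / 2 ^ l) (\<Delta> / 2 ^ l * sqrt d / \<delta> + \<Delta> / 2 ^ l / 2)"
proof -
  have R: "reached d \<Delta> \<delta> n m p V c"
    using assms(4) by (simp add: cells_Q_def)
  then show ?thesis
  proof (cases rule: reached.cases)
    case (init a)
    then obtain k x where "k < m" "x \<in> dcube d a \<Delta>" "x \<in> dsimplex d (V k)"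
      by blast
    then show ?thesis
      using initial_cell_in_grid_cells[of a d \<Delta> x "V k"] init edges that(1) by blast
  next
    case (sub a s b)
    obtain l where l: "s = \<Delta> / 2 ^ l" and a: "a \<in> RR d"
      using reached_grid_cell[OF sub(2)] by auto
    have b_grid: "\<forall>i<d. \<exists>z::int. b i = of_int z * (s / 2)"
      using reached_grid_cell[OF R] sub(1) by auto
    have s: "0 \<le> s"
      using l assms(1) by simp
    obtain j x where "j < n" "x \<in> dcube d a s" "edist d (p j) x < s * sqrt d / \<delta>"
      using not_stop_cell_imp_near_point[OF a s assms(2) sub(3)] by blast
    moreover have "\<delta> * (\<delta> / real (n * m) powr (1 / real d)) < \<Delta> * sqrt d * (1 + \<delta>) / 2 ^ l"
      using stop_cell_if_small_side[OF a s assms(2)] sub(3) l by (force simp: not_le)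
    ultimately show ?thesis
      using subcell_in_grid_cells[of x d a s "p j" "s * sqrt d / \<delta>" b] sub(1,4,5) b_grid s l
        that(2) by auto
  qed
qed

lemma card_initial_grid_cells:
  assumes "0 < \<Delta>"
  shows "finite (grid_cells d \<Delta> c (2 * \<Delta>) \<Delta>)" "card (grid_cells d \<Delta> c (2 * \<Delta>) \<Delta>) \<le> 4 ^ d"
proof -
  show "finite (grid_cells d \<Delta> c (2 * \<Delta>) \<Delta>)"
    using card_grid_cells(1)[of \<Delta> "2 * \<Delta>" \<Delta>] assms by simp
  have "real (card (grid_cells d \<Delta> c (2 * \<Delta>) \<Delta>)) \<le> ((2 * \<Delta> + \<Delta>) / \<Delta> + 1) ^ d"
    using card_grid_cells(2)[of \<Delta> "2 * \<Delta>" \<Delta>] assms by simp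
  also have "\<dots> = 4 ^ d"
    using assms by simp
  finally show "card (grid_cells d \<Delta> c (2 * \<Delta>) \<Delta>) \<le> 4 ^ d"
    by (simp flip: of_nat_le_iff)
qed

lemma card_refined_grid_cells:
  assumes "0 < s" "0 < \<delta>"
  shows "finite (grid_cells d (s / 2) q (s * sqrt d / \<delta> + s) (s * sqrt d / \<delta> + s / 2))"
    and "real (card (grid_cells d (s / 2) q (s * sqrt d / \<delta> + s) (s * sqrt d / \<delta> + s / 2)))
      \<le> (4 * sqrt d / \<delta> + 4) ^ d"
proof -
  have nonneg: "0 \<le> s * sqrt d / \<delta>"
    using assms by simp
  show "finite (grid_cells d (s / 2) q (s * sqrt d / \<delta> + s) (s * sqrt d / \<delta> + s / 2))"
    using assms(1) nonneg by (intro card_grid_cells(1)) auto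
  have "real (card (grid_cells d (s / 2) q (s * sqrt d / \<delta> + s) (s * sqrt d / \<delta> + s / 2)))
      \<le> ((s * sqrt d / \<delta> + s + (s * sqrt d / \<delta> + s / 2)) / (s / 2) + 1) ^ d"
    using assms(1) nonneg by (intro card_grid_cells(2)) auto
  also have "(s * sqrt d / \<delta> + s + (s * sqrt d / \<delta> + s / 2)) / (s / 2) + 1 = 4 * sqrt d / \<delta> + 4"
    using assms(1) by (simp add: field_simps)
  finally show "real (card (grid_cells d (s / 2) q (s * sqrt d / \<delta> + s) (s * sqrt d / \<delta> + s / 2)))
      \<le> (4 * sqrt d / \<delta> + 4) ^ d" .
qed

lemma card_cells_Q_le_levels:
  fixes d n m :: nat and \<Delta> \<delta> :: real
  defines "L \<equiv> {l::nat. \<delta> * (\<delta> / real (n * m) powr (1 / real d)) < \<Delta> * sqrt d * (1 + \<delta>) / 2 ^ l}"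
  assumes "0 < \<Delta>" "0 < \<delta>" "finite L"
    and edges: "\<forall>k<m. \<forall>j\<le>d. edist d (V k j) (V k 0) \<le> \<Delta>"
  shows "finite (cells_Q d \<Delta> \<delta> n m p V)"
    and "real (card (cells_Q d \<Delta> \<delta> n m p V))
      \<le> real m * 4 ^ d + real (card L) * real n * (4 * sqrt d / \<delta> + 4) ^ d"
proof -
  define Init where "Init = (\<Union>k<m. grid_cells d \<Delta> (V k 0) (2 * \<Delta>) \<Delta>)"
  define Ref where "Ref l j = grid_cells d (\<Delta> / 2 ^ l / 2) (p j)
    (\<Delta> / 2 ^ l * sqrt d / \<delta> + \<Delta> / 2 ^ l) (\<Delta> / 2 ^ l * sqrt d / \<delta> + \<Delta> / 2 ^ l / 2)" for l j
  have cover: "cells_Q d \<Delta> \<delta> n m p V \<subseteq> Init \<union> (\<Union>l\<in>L. \<Union>j<n. Ref l j)"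
  proof
    fix c assume c: "c \<in> cells_Q d \<Delta> \<delta> n m p V"
    show "c \<in> Init \<union> (\<Union>l\<in>L. \<Union>j<n. Ref l j)"
      by (rule cells_Q_cases[OF less_imp_le[OF assms(2)] assms(3) edges c])
        (auto simp: Init_def Ref_def L_def)
  qed
  have Ref_card: "finite (Ref l j)" "real (card (Ref l j)) \<le> (4 * sqrt d / \<delta> + 4) ^ d" for l j
    unfolding Ref_def using card_refined_grid_cells[of "\<Delta> / 2 ^ l" \<delta>] assms(2,3) by simp_all
  have finite_cover: "finite (Init \<union> (\<Union>l\<in>L. \<Union>j<n. Ref l j))"
    using assms(2,4) card_initial_grid_cells(1) Ref_card(1) by (auto simp: Init_def)
  then show "finite (cells_Q d \<Delta> \<delta> n m p V)"
    using cover finite_subset by blast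
  have "card (cells_Q d \<Delta> \<delta> n m p V) \<le> card (Init \<union> (\<Union>l\<in>L. \<Union>j<n. Ref l j))"
    by (rule card_mono[OF finite_cover cover])
  also have "\<dots> \<le> card Init + card (\<Union>l\<in>L. \<Union>j<n. Ref l j)"
    by (rule card_Un_le)
  also have "card Init \<le> (\<Sum>k<m. card (grid_cells d \<Delta> (V k 0) (2 * \<Delta>) \<Delta>))"
    unfolding Init_def by (rule card_UN_le) simp
  also have "\<dots> \<le> m * 4 ^ d"
    using sum_mono[of "{..<m}" "\<lambda>k. card (grid_cells d \<Delta> (V k 0) (2 * \<Delta>) \<Delta>)" "\<lambda>_. 4 ^ d"]
      card_initial_grid_cells(2)[OF assms(2)] by simp
  also have "card (\<Union>l\<in>L. \<Union>j<n. Ref l j) \<le> (\<Sum>l\<in>L. card (\<Union>j<n. Ref l j))"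
    by (rule card_UN_le[OF assms(4)])
  also have "\<dots> \<le> (\<Sum>l\<in>L. \<Sum>j<n. card (Ref l j))"
    by (intro sum_mono card_UN_le) simp
  finally have "real (card (cells_Q d \<Delta> \<delta> n m p V))
      \<le> real (m * 4 ^ d + (\<Sum>l\<in>L. \<Sum>j<n. card (Ref l j)))"
    by (simp only: of_nat_le_iff)
  also have "\<dots> = real m * 4 ^ d + (\<Sum>l\<in>L. \<Sum>j<n. real (card (Ref l j)))"
    by simp
  also have "(\<Sum>l\<in>L. \<Sum>j<n. real (card (Ref l j))) \<le> (\<Sum>l\<in>L. \<Sum>j<n. (4 * sqrt d / \<delta> + 4) ^ d)"
    using Ref_card(2) by (intro sum_mono) auto
  finally show "real (card (cells_Q d \<Delta> \<delta> n m p V))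
      \<le> real m * 4 ^ d + real (card L) * real n * (4 * sqrt d / \<delta> + 4) ^ d"
    by simp
qed

section \<open>Estimates\<close>

lemma sqrt_power_self:
  assumes "1 \<le> d"
  shows "sqrt (real d) ^ d = real d powr (real d / 2)"
proof -
  have "sqrt (real d) ^ d = (real d powr (1 / 2)) ^ d"
    by (simp add: powr_half_sqrt)
  also have "\<dots> = real d powr (real d / 2)"
    using assms by (simp add: powr_realpow[symmetric] powr_powr)
  finally show ?thesis .
qed

lemma grid_factor_le:
  assumes "1 \<le> d" "0 < \<delta>" "\<delta> \<le> 1 / 2"
  shows "(4 * sqrt d / \<delta> + 4) ^ d \<le> 2 * (5 ^ d * real d powr (real d / 2) / \<delta> ^ d)"
proof -
  have "(4 * sqrt d + 2) ^ d \<le> 2 * (5 * sqrt d) ^ d"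
  proof (cases "4 \<le> d")
    case True
    then have "2 \<le> sqrt d"
      by (simp add: real_le_rsqrt)
    then have "(4 * sqrt d + 2) ^ d \<le> (5 * sqrt d) ^ d"
      by (intro power_mono) auto
    moreover have "0 \<le> (5 * sqrt d) ^ d"
      by simp
    ultimately show ?thesis
      by linarith
  next
    case False
    have "(4 * sqrt d + 2) ^ d \<le> (6 / 5 * (5 * sqrt d)) ^ d"
      using assms(1) by (intro power_mono) auto
    also have "\<dots> = (6 / 5) ^ d * (5 * sqrt d) ^ d"
      by (simp only: power_mult_distrib)
    also have "\<dots> \<le> 2 * (5 * sqrt d) ^ d"
    proof (intro mult_right_mono)
      have "(6 / 5 :: real) ^ d \<le> (6 / 5) ^ 3"
        using False by (intro power_increasing) auto
      then show "(6 / 5 :: real) ^ d \<le> 2"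
        by (simp add: power3_eq_cube)
    qed simp
    finally show ?thesis .
  qed
  have "4 * sqrt d / \<delta> + 4 \<le> (4 * sqrt d + 2) / \<delta>"
    using assms by (simp add: field_simps)
  then have "(4 * sqrt d / \<delta> + 4) ^ d \<le> ((4 * sqrt d + 2) / \<delta>) ^ d"
    using assms(2) by (intro power_mono) auto
  also have "\<dots> = (4 * sqrt d + 2) ^ d / \<delta> ^ d"
    by (simp add: power_divide)
  also have "\<dots> \<le> 2 * (5 * sqrt d) ^ d / \<delta> ^ d"
    using \<open>(4 * sqrt d + 2) ^ d \<le> 2 * (5 * sqrt d) ^ d\<close> assms(2) by (intro divide_right_mono) auto
  also have "\<dots> = 2 * (5 ^ d * real d powr (real d / 2) / \<delta> ^ d)"
    by (simp add: power_mult_distrib sqrt_power_self[OF assms(1)])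
  finally show ?thesis .
qed

lemma level_ratio_le:
  assumes "0 < \<delta>" "1 / \<delta> \<le> X" "2 \<le> X"
  shows "X * sqrt d * (1 + \<delta>) / \<delta> \<le> X ^ 3 * 2 ^ d"
proof -
  have "sqrt d \<le> 2 ^ d"
  proof (cases "d = 0")
    case False
    then have "sqrt d \<le> real d"
      by (simp add: real_sqrt_le_iff' power2_eq_square)
    also have "\<dots> \<le> 2 ^ d"
      using less_exp[of d] by (metis of_nat_le_iff of_nat_numeral of_nat_power less_imp_le)
    finally show ?thesis .
  qed simp
  moreover have "(1 + \<delta>) / \<delta> \<le> X ^ 2"
  proof -
    have "(1 + \<delta>) / \<delta> = 1 / \<delta> + 1"
      using assms(1) by (simp add: field_simps)
    also have "\<dots> \<le> 2 * X"
      using assms(2,3) by linarith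
    also have "\<dots> \<le> X ^ 2"
      using assms(3) by (simp add: power2_eq_square mult_right_mono)
    finally show ?thesis .
  qed
  ultimately show ?thesis
    using assms mult_mono[of "X * sqrt d" "X * 2 ^ d" "(1 + \<delta>) / \<delta>" "X ^ 2"]
    by (simp add: power3_eq_cube power2_eq_square algebra_simps)
qed

lemma log_levels_le_ln:
  assumes "1 \<le> d" "0 < \<delta>" "\<delta> \<le> 1 / 2" "1 / \<delta> \<le> X"
  shows "log 2 (X * sqrt d * (1 + \<delta>) / \<delta>) + 1 \<le> 8 * real d * ln X"
proof -
  have "2 \<le> 1 / \<delta>"
    using assms(2,3) by (simp add: field_simps)
  then have X: "2 \<le> X"
    using assms(4) by linarith
  then have lg: "1 \<le> log 2 X"
    by simp
  have "log 2 (X * sqrt d * (1 + \<delta>) / \<delta>) \<le> log 2 (X ^ 3 * 2 ^ d)"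
    using level_ratio_le[OF assms(2,4) X] X assms(1,2) by (intro log_mono) auto
  also have "\<dots> = 3 * log 2 X + real d"
    using X by (simp add: log_mult log_nat_power)
  finally have "log 2 (X * sqrt d * (1 + \<delta>) / \<delta>) + 1 \<le> 3 * log 2 X + real d + 1"
    by simp
  also have "\<dots> \<le> 5 * real d * log 2 X"
  proof -
    have "real d * 1 \<le> real d * log 2 X"
      using lg by (intro mult_left_mono) auto
    moreover have "4 * log 2 X \<le> 4 * real d * log 2 X"
      using lg assms(1) by (intro mult_right_mono) auto
    ultimately show ?thesis
      using lg by linarith
  qed
  also have "\<dots> = 5 * real d * ln X / ln 2"
    by (simp add: log_def)
  also have "\<dots> \<le> 5 * real d * ln X / (2 / 3)"
    using X ln2_ge_two_thirds by (intro divide_left_mono) auto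
  also have "\<dots> \<le> 8 * real d * ln X"
    using X by simp
  finally show ?thesis .
qed

lemma four_power_le:
  assumes "1 \<le> d" "0 < \<delta>" "\<delta> \<le> 1"
  shows "4 ^ d \<le> 5 ^ d * real d powr (real d / 2) / \<delta> ^ d"
proof -
  have "(4::real) ^ d \<le> 5 ^ d * 1"
    by (simp add: power_mono)
  also have "\<dots> \<le> 5 ^ d * real d powr (real d / 2)"
    using assms(1) by (intro mult_left_mono ge_one_powr_ge_zero) auto
  also have "\<dots> \<le> 5 ^ d * real d powr (real d / 2) / \<delta> ^ d"
  proof -
    have "0 < \<delta> ^ d" "\<delta> ^ d \<le> 1"
      using assms(2,3) by (auto simp: power_le_one)
    then show ?thesis
      by (simp add: le_divide_eq mult_left_le)
  qed
  finally show ?thesis .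
qed

lemma cell_count_estimate:
  fixes d n m :: nat
  assumes "1 \<le> d" "1 \<le> n" "1 \<le> m" "0 < \<delta>" "\<delta> \<le> 1 / 2" "1 / \<delta> \<le> X"
    and "0 \<le> L" "L \<le> log 2 (X * sqrt d * (1 + \<delta>) / \<delta>) + 1"
  shows "real m * 4 ^ d + L * real n * (4 * sqrt d / \<delta> + 4) ^ d
    \<le> 20 * (5 ^ d * real d * real d powr (real d / 2) * real (n * m) / \<delta> ^ d) * ln X"
proof -
  define G where "G = 5 ^ d * real d powr (real d / 2) / \<delta> ^ d"
  have "2 \<le> 1 / \<delta>"
    using assms(4,5) by (simp add: field_simps)
  then have "ln 2 \<le> ln X"
    using assms(6) by simp
  then have lnX: "2 / 3 \<le> ln X"
    using ln2_ge_two_thirds by linarith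
  have G: "4 ^ d \<le> G"
    unfolding G_def using four_power_le assms(1,4,5) by simp
  have G0: "0 \<le> G"
    using G zero_le_power[of "4 :: real" d] by linarith
  define P where "P = real d * real (n * m) * G * ln X"
  have dGlnX: "0 \<le> real d * G * ln X"
    using G0 lnX by simp
  have "1 * 1 \<le> real d * real n"
    using assms(1,2) by (intro mult_mono) auto
  then have "1 * 1 \<le> real d * real n * (3 / 2 * ln X)"
    using lnX by (intro mult_mono) auto
  then have "real m * 4 ^ d * 1 \<le> real m * G * (real d * real n * (3 / 2 * ln X))"
    using G G0 by (intro mult_mono mult_left_mono) auto
  then have initial: "real m * 4 ^ d \<le> 3 / 2 * P"
    by (simp add: P_def algebra_simps)
  have "L * real n * (4 * sqrt d / \<delta> + 4) ^ d \<le> (8 * real d * ln X) * real n * (2 * G)"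
    using log_levels_le_ln[OF assms(1,4,5,6)] grid_factor_le[OF assms(1,4,5)] assms(4,7,8)
    by (intro mult_mono) (auto simp: G_def)
  also have "\<dots> = 16 * (real n * (real d * G * ln X))"
    by (simp add: algebra_simps)
  also have "\<dots> \<le> 16 * (real (n * m) * (real d * G * ln X))"
    using assms(3) dGlnX by (intro mult_left_mono mult_right_mono) (simp_all add: mult_le_mono1 del: of_nat_mult)
  also have "\<dots> = 16 * P"
    by (simp add: P_def algebra_simps)
  finally have refined: "L * real n * (4 * sqrt d / \<delta> + 4) ^ d \<le> 16 * P" .
  have "real m * 4 ^ d + L * real n * (4 * sqrt d / \<delta> + 4) ^ d \<le> 3 / 2 * P + 16 * P"
    using initial refined by (rule add_mono)
  also have "\<dots> \<le> 20 * P"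
    unfolding P_def using G0 lnX by simp
  also have "\<dots> = 20 * (5 ^ d * real d * real d powr (real d / 2) * real (n * m) / \<delta> ^ d) * ln X"
    by (simp add: P_def G_def)
  finally show ?thesis .
qed

lemma one_le_root_mult:
  fixes d n m :: nat
  assumes "1 \<le> d" "1 \<le> n" "0 \<le> \<Delta>" "1 \<le> real m * \<Delta> ^ d"
  shows "1 \<le> real (n * m) powr (1 / real d) * \<Delta>"
proof -
  have "0 < real (n * m)"
    using assms(2,4) by (cases "m = 0") auto
  then have "(real (n * m) powr (1 / real d)) ^ d = real (n * m)"
    using assms(1) root_powr_inverse[of d "real (n * m)"] real_root_pow_pos2[of d "real (n * m)"]
    by simp
  then have "(real (n * m) powr (1 / real d) * \<Delta>) ^ d = real n * (real m * \<Delta> ^ d)"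
    by (simp add: power_mult_distrib)
  also have "\<dots> \<ge> 1 * 1"
    using assms(2,4) by (intro mult_mono) auto
  finally have "1 ^ d \<le> (real (n * m) powr (1 / real d) * \<Delta>) ^ d"
    by simp
  then show ?thesis
    using assms(1,3) by (intro power_le_imp_le_base[of 1 "d - 1"]) auto
qed

lemma card_levels_le_log:
  fixes b c :: real
  assumes "0 < c" "c \<le> b"
  shows "finite {l::nat. c < b / 2 ^ l}" "real (card {l::nat. c < b / 2 ^ l}) \<le> log 2 (b / c) + 1"
proof -
  let ?N = "nat \<lceil>log 2 (b / c)\<rceil>"
  have "l < ?N" if "c < b / 2 ^ l" for l
  proof -
    have "2 powr real l < b / c"
      using that assms(1) by (simp add: powr_realpow field_simps)
    then have "real l < log 2 (b / c)"
      using assms by (subst less_log_iff) auto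
    then show ?thesis
      by linarith
  qed
  then have sub: "{l. c < b / 2 ^ l} \<subseteq> {..<?N}"
    by blast
  then show "finite {l::nat. c < b / 2 ^ l}"
    using finite_subset by blast
  have "card {l. c < b / 2 ^ l} \<le> ?N"
    using card_mono[OF _ sub] by simp
  moreover have "0 \<le> log 2 (b / c)"
    using assms by simp
  ultimately show "real (card {l::nat. c < b / 2 ^ l}) \<le> log 2 (b / c) + 1"
    by linarith
qed

lemma card_refinement_levels_le:
  fixes d :: nat
  assumes "1 \<le> d" "0 < \<delta>" "\<delta> \<le> 1 / 2" "0 < A" "1 \<le> A * \<Delta>"
  shows "finite {l::nat. \<delta> * (\<delta> / A) < \<Delta> * sqrt d * (1 + \<delta>) / 2 ^ l}"
    and "real (card {l::nat. \<delta> * (\<delta> / A) < \<Delta> * sqrt d * (1 + \<delta>) / 2 ^ l})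
      \<le> log 2 (A * \<Delta> / \<delta> * sqrt d * (1 + \<delta>) / \<delta>) + 1"
proof -
  have "0 < A * \<Delta>"
    using assms(5) by linarith
  then have "0 < \<Delta>"
    using assms(4) by (rule zero_less_mult_pos)
  have "\<delta> * (\<delta> / A) \<le> 1 / A"
    using assms(2-4) by (simp add: divide_right_mono mult_le_one)
  also have "\<dots> \<le> \<Delta>"
    using assms(4,5) by (simp add: field_simps)
  also have "\<dots> \<le> \<Delta> * (sqrt d * (1 + \<delta>))"
  proof -
    have "1 * 1 \<le> sqrt d * (1 + \<delta>)"
      using assms(1,2) by (intro mult_mono) auto
    then show ?thesis
      using \<open>0 < \<Delta>\<close> by simp
  qed
  finally have le: "\<delta> * (\<delta> / A) \<le> \<Delta> * sqrt d * (1 + \<delta>)"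
    by (simp add: mult.assoc)
  have pos: "0 < \<delta> * (\<delta> / A)"
    using assms(2,4) by simp
  have ratio: "\<Delta> * sqrt d * (1 + \<delta>) / (\<delta> * (\<delta> / A)) = A * \<Delta> / \<delta> * sqrt d * (1 + \<delta>) / \<delta>"
    using assms(2,4) by (simp add: field_simps)
  show "finite {l::nat. \<delta> * (\<delta> / A) < \<Delta> * sqrt d * (1 + \<delta>) / 2 ^ l}"
    by (rule card_levels_le_log(1)[OF pos le])
  show "real (card {l::nat. \<delta> * (\<delta> / A) < \<Delta> * sqrt d * (1 + \<delta>) / 2 ^ l})
      \<le> log 2 (A * \<Delta> / \<delta> * sqrt d * (1 + \<delta>) / \<delta>) + 1"
    using card_levels_le_log(2)[OF pos le] unfolding ratio .
qed

lemma card_cells_Q_le: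
  fixes d n m :: nat
  assumes "1 \<le> d" "1 \<le> n" "1 \<le> m" "0 < \<delta>" "\<delta> \<le> 1 / 2"
    and edges: "\<forall>k<m. \<forall>i\<le>d. \<forall>j\<le>d. edist d (V k i) (V k j) \<le> \<Delta>"
    and volume: "(\<Sum>k<m. measure (leb d) (dsimplex d (V k))) = 1"
  shows "finite (cells_Q d \<Delta> \<delta> n m p V)"
    and "real (card (cells_Q d \<Delta> \<delta> n m p V))
      \<le> 20 * (5 ^ d * real d * real d powr (real d / 2) * real (n * m) / \<delta> ^ d)
          * ln (real (n * m) powr (1 / real d) * \<Delta> / \<delta>)"
proof -
  define A where "A = real (n * m) powr (1 / real d)"
  have "0 < A"
    using assms(2,3) by (simp add: A_def)
  have "0 \<le> \<Delta>"
    using edges assms(3) edist_nonneg[of d "V 0 0" "V 0 0"] by force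
  moreover have "1 \<le> real m * \<Delta> ^ d"
    using volume sum_measure_dsimplex_le[OF edges] by simp
  ultimately have A\<Delta>: "1 \<le> A * \<Delta>"
    unfolding A_def by (rule one_le_root_mult[OF assms(1,2)])
  then have "0 < A * \<Delta>"
    by linarith
  then have "0 < \<Delta>"
    using \<open>0 < A\<close> by (rule zero_less_mult_pos)
  note levels = card_refinement_levels_le[OF assms(1,4,5) \<open>0 < A\<close> A\<Delta>]
  have edges0: "\<forall>k<m. \<forall>j\<le>d. edist d (V k j) (V k 0) \<le> \<Delta>"
    using edges by blast
  note count = card_cells_Q_le_levels[where n = n and p = p, OF \<open>0 < \<Delta>\<close> assms(4) _ edges0, folded A_def, OF levels(1)]
  show "finite (cells_Q d \<Delta> \<delta> n m p V)"
    by (fact count(1))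
  have X: "1 / \<delta> \<le> A * \<Delta> / \<delta>"
    using A\<Delta> assms(4) by (intro divide_right_mono) auto
  note count(2)
  also have "real m * 4 ^ d + real (card {l. \<delta> * (\<delta> / A) < \<Delta> * sqrt d * (1 + \<delta>) / 2 ^ l})
      * real n * (4 * sqrt d / \<delta> + 4) ^ d
    \<le> 20 * (5 ^ d * real d * real d powr (real d / 2) * real (n * m) / \<delta> ^ d) * ln (A * \<Delta> / \<delta>)"
    by (rule cell_count_estimate[OF assms(1-5) X of_nat_0_le_iff levels(2)])
  finally show "real (card (cells_Q d \<Delta> \<delta> n m p V))
      \<le> 20 * (5 ^ d * real d * real d powr (real d / 2) * real (n * m) / \<delta> ^ d)
          * ln (real (n * m) powr (1 / real d) * \<Delta> / \<delta>)"
    unfolding A_def .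
qed

theorem lemma19:
  shows "\<exists>C>0. \<forall>(d::nat) (n::nat) (m::nat) (p::nat \<Rightarrow> nat \<Rightarrow> real) (w::nat \<Rightarrow> real)
      (V::nat \<Rightarrow> nat \<Rightarrow> nat \<Rightarrow> real) (\<Delta>::real) (\<delta>::real).
     d \<ge> 1 \<and> n \<ge> 1 \<and> m \<ge> 1
   \<and> (\<forall>k<n. p k \<in> RR d) \<and> inj_on p {..<n}
   \<and> (\<forall>k<n. w k > 0) \<and> (\<Sum>k<n. w k) = 1
   \<and> (\<forall>k<m. (\<forall>j\<le>d. V k j \<in> RR d) \<and> aff_indep d (V k))
   \<and> inj_on (\<lambda>k. dsimplex d (V k)) {..<m}
   \<and> (\<Sum>k<m. measure (leb d) (dsimplex d (V k))) = 1
   \<and> \<Delta> = Max {edist d (V k i) (V k j) | k i j. k < m \<and> i \<le> d \<and> j \<le> d}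
   \<and> 0 < \<delta> \<and> \<delta> \<le> 1 / 2
   \<longrightarrow> finite (cells_Q d \<Delta> \<delta> n m p V)
     \<and> real (card (cells_Q d \<Delta> \<delta> n m p V))
        \<le> C * (5 ^ d * real d * real d powr (real d / 2) * real (n * m) / \<delta> ^ d)
            * ln ((real (n * m)) powr (1 / real d) * \<Delta> / \<delta>)"
proof -
  have "finite (cells_Q d \<Delta> \<delta> n m p V) \<and> real (card (cells_Q d \<Delta> \<delta> n m p V))
      \<le> 20 * (5 ^ d * real d * real d powr (real d / 2) * real (n * m) / \<delta> ^ d)
          * ln (real (n * m) powr (1 / real d) * \<Delta> / \<delta>)"
    if "1 \<le> d" "1 \<le> n" "1 \<le> m" "0 < \<delta>" "\<delta> \<le> 1 / 2"
      and "(\<Sum>k<m. measure (leb d) (dsimplex d (V k))) = 1"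
      and "\<Delta> = Max {edist d (V k i) (V k j) | k i j. k < m \<and> i \<le> d \<and> j \<le> d}"
    for d n m :: nat and p :: "nat \<Rightarrow> nat \<Rightarrow> real" and V :: "nat \<Rightarrow> nat \<Rightarrow> nat \<Rightarrow> real"
      and \<Delta> \<delta> :: real
  proof -
    have "\<forall>k<m. \<forall>i\<le>d. \<forall>j\<le>d. edist d (V k i) (V k j) \<le> \<Delta>"
      using edge_le_Max that(7) by blast
    then show ?thesis
      using card_cells_Q_le[OF that(1-5) _ that(6)] by blast
  qed
  then show ?thesis
    by (intro exI[of _ 20]) auto
qed

end
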